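(* Let $n,m\ge1$, $c_1,\dots,c_n>0$, $T>0$, $\epsilon>0$, $r_1,\dots,r_m>0$ and $\kappa_{ij}\ge0$. For $\mu\in\mathbb{R}^n$ let $\varphi^i_\epsilon(\mu)=-\epsilon\log\big(\sum_{j=1}^n e^{-(\kappa_{ij}+\mu_j)/\epsilon}\big)$, and define on $[0,T)^n$ $$D(\mu)=\sum_{i=1}^m r_i\varphi^i_\epsilon(\mu)+\sum_{j=1}^n c_j\log\Big(1-\frac{\mu_j}{T}\Big).$$ Then $D$ is strictly concave on $[0,T)^n$ and has a finite maximum $D^*$ over $[0,T)^n$, achieved at a unique $\mu^*\in[0,T)^n$.
   Context: $D$ is the Lagrange dual function of the station-assignment optimization problem (minimizing $\sum\kappa_{ij}x_{ij}+\sum_j\beta_j(q_j)+\epsilon\sum x_{ij}\log(x_{ij}/r_i)$ subject to $x_{ij}\ge0$, $\sum_jx_{ij}=r_i$, $\sum_ix_{ij}=q_j/T$), dualized with respect to the last constraint. *)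

theory Defs
  imports "HOL-Analysis.Analysis"
begin

definition strictly_concave_on :: "'a::real_vector set \<Rightarrow> ('a \<Rightarrow> real) \<Rightarrow> bool"
  where "strictly_concave_on S f \<longleftrightarrow> convex S \<and>
    (\<forall>x\<in>S. \<forall>y\<in>S. x \<noteq> y \<longrightarrow> (\<forall>t. 0 < t \<and> t < 1 \<longrightarrow>
       f ((1 - t) *\<^sub>R x + t *\<^sub>R y) > (1 - t) * f x + t * f y))"

definition phi_eps :: "real \<Rightarrow> ('m \<Rightarrow> 'n::finite \<Rightarrow> real) \<Rightarrow> 'm \<Rightarrow> real^'n \<Rightarrow> real"
  where "phi_eps \<epsilon> \<kappa> i \<mu> = - \<epsilon> * ln (\<Sum>j\<in>UNIV. exp (- (\<kappa> i j + \<mu> $ j) / \<epsilon>))"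

definition dual_D :: "real \<Rightarrow> real \<Rightarrow> ('m::finite \<Rightarrow> real) \<Rightarrow> ('n::finite \<Rightarrow> real)
    \<Rightarrow> ('m \<Rightarrow> 'n \<Rightarrow> real) \<Rightarrow> real^'n \<Rightarrow> real"
  where "dual_D T \<epsilon> r c \<kappa> \<mu> =
    (\<Sum>i\<in>UNIV. r i * phi_eps \<epsilon> \<kappa> i \<mu>) + (\<Sum>j\<in>UNIV. c j * ln (1 - \<mu> $ j / T))"

definition box_T :: "real \<Rightarrow> (real^'n) set"
  where "box_T T = {\<mu>. \<forall>j. 0 \<le> \<mu> $ j \<and> \<mu> $ j < T}"

end

theory Submission
  imports Defs
begin

text \<open>Each \<open>phi_eps\<close> is minus \<open>\<epsilon>\<close> times the log-sum-exp of an affine function of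
  \<open>\<mu>\<close>, hence concave, while the barrier \<open>\<Sum>j. c j * ln (1 - \<mu> $ j / T)\<close> is a sum of strictly
  concave functions of the separate coordinates; so \<open>D\<close> is strictly concave and has at most one
  maximiser. For existence, the soft-min bound \<open>phi_eps \<epsilon> \<kappa> i \<mu> \<le> \<kappa> i j + \<mu> $ j\<close> bounds
  \<open>D \<mu>\<close> by a constant plus \<open>c j * ln (1 - \<mu> $ j / T)\<close>, which tends to \<open>-\<infinity>\<close> as \<open>\<mu> $ j \<rightarrow> T\<close>.
  Hence \<open>D\<close> stays below \<open>D 0\<close> outside a compact box inside \<open>[0, T)\<^sup>n\<close>, and the maximum of
  \<open>D\<close> on that box is global.\<close>

lemma strictly_concave_onI:
  assumes "convex S"
    and "\<And>x y t. x \<in> S \<Longrightarrow> y \<in> S \<Longrightarrow> x \<noteq> y \<Longrightarrow> 0 < t \<Longrightarrow> t < 1 \<Longrightarrow>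
      (1 - t) * f x + t * f y < f ((1 - t) *\<^sub>R x + t *\<^sub>R y)"
  shows "strictly_concave_on S f"
  using assms unfolding strictly_concave_on_def by blast

lemma strictly_concave_onD:
  assumes "strictly_concave_on S f" "x \<in> S" "y \<in> S" "x \<noteq> y" "0 < t" "t < 1"
  shows "(1 - t) * f x + t * f y < f ((1 - t) *\<^sub>R x + t *\<^sub>R y)"
  using assms unfolding strictly_concave_on_def by blast

lemma strictly_concave_on_imp_convex: "strictly_concave_on S f \<Longrightarrow> convex S"
  unfolding strictly_concave_on_def by (rule conjunct1)

lemma strictly_concave_on_cmul:
  assumes "c > 0" "strictly_concave_on S f"
  shows "strictly_concave_on S (\<lambda>x. c * f x)"
proof (rule strictly_concave_onI)
  show "convex S"
    using assms(2) by (rule strictly_concave_on_imp_convex)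
  fix x y and t :: real
  assume "x \<in> S" "y \<in> S" "x \<noteq> y" "0 < t" "t < 1"
  then have "c * ((1 - t) * f x + t * f y) < c * f ((1 - t) *\<^sub>R x + t *\<^sub>R y)"
    using assms by (intro mult_strict_left_mono strictly_concave_onD)
  then show "(1 - t) * (c * f x) + t * (c * f y) < c * f ((1 - t) *\<^sub>R x + t *\<^sub>R y)"
    by (simp add: algebra_simps)
qed

lemma strictly_concave_on_add_concave_on:
  assumes "strictly_concave_on S f" "concave_on S g"
  shows "strictly_concave_on S (\<lambda>x. f x + g x)"
proof (rule strictly_concave_onI)
  show "convex S"
    using assms(1) by (rule strictly_concave_on_imp_convex)
  fix x y and t :: real
  assume xy: "x \<in> S" "y \<in> S" "x \<noteq> y" and t: "0 < t" "t < 1"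
  have "(1 - t) * f x + t * f y < f ((1 - t) *\<^sub>R x + t *\<^sub>R y)"
    using assms(1) xy t by (rule strictly_concave_onD)
  moreover have "(1 - t) * g x + t * g y \<le> g ((1 - t) *\<^sub>R x + t *\<^sub>R y)"
    using concave_onD[OF assms(2)] xy t by simp
  ultimately show "(1 - t) * (f x + g x) + t * (f y + g y)
      < f ((1 - t) *\<^sub>R x + t *\<^sub>R y) + g ((1 - t) *\<^sub>R x + t *\<^sub>R y)"
    by (simp add: algebra_simps)
qed

lemma strictly_concave_on_sum_coordinates:
  fixes g :: "'n::finite \<Rightarrow> real \<Rightarrow> real"
  assumes "\<And>j. strictly_concave_on (I j) (g j)"
  shows "strictly_concave_on {x::real^'n. \<forall>j. x $ j \<in> I j} (\<lambda>x. \<Sum>j\<in>UNIV. g j (x $ j))"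
proof (rule strictly_concave_onI)
  have "convex (I j)" for j
    using assms by (rule strictly_concave_on_imp_convex)
  then show "convex {x::real^'n. \<forall>j. x $ j \<in> I j}"
    by (auto simp: convex_def)
  fix x y :: "real^'n" and t :: real
  assume "x \<in> {x. \<forall>j. x $ j \<in> I j}" "y \<in> {x. \<forall>j. x $ j \<in> I j}" "x \<noteq> y"
    and t: "0 < t" "t < 1"
  then have x: "x $ j \<in> I j" and y: "y $ j \<in> I j" for j
    by auto
  have less: "(1 - t) * g j (x $ j) + t * g j (y $ j) < g j (((1 - t) *\<^sub>R x + t *\<^sub>R y) $ j)"
    if "x $ j \<noteq> y $ j" for j
    using strictly_concave_onD[OF assms x y that t] by simp
  have le: "(1 - t) * g j (x $ j) + t * g j (y $ j) \<le> g j (((1 - t) *\<^sub>R x + t *\<^sub>R y) $ j)" for j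
    using less[of j] by (cases "x $ j = y $ j") (auto simp flip: distrib_right)
  obtain j0 where "x $ j0 \<noteq> y $ j0"
    using \<open>x \<noteq> y\<close> by (auto simp: vec_eq_iff)
  then have "(\<Sum>j\<in>UNIV. (1 - t) * g j (x $ j) + t * g j (y $ j))
      < (\<Sum>j\<in>UNIV. g j (((1 - t) *\<^sub>R x + t *\<^sub>R y) $ j))"
    using le less by (intro sum_strict_mono_ex1) auto
  then show "(1 - t) * (\<Sum>j\<in>UNIV. g j (x $ j)) + t * (\<Sum>j\<in>UNIV. g j (y $ j))
      < (\<Sum>j\<in>UNIV. g j (((1 - t) *\<^sub>R x + t *\<^sub>R y) $ j))"
    by (simp add: sum.distrib sum_distrib_left)
qed

lemma strictly_concave_on_maximizer_unique:
  assumes "strictly_concave_on S f" "x \<in> S" "y \<in> S"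
    and "\<forall>z\<in>S. f z \<le> f x" "\<forall>z\<in>S. f z \<le> f y"
  shows "x = y"
proof (rule ccontr)
  assume "x \<noteq> y"
  define m where "m = (1 - 1/2) *\<^sub>R x + (1/2) *\<^sub>R y"
  have "m \<in> S"
    using convexD[OF strictly_concave_on_imp_convex[OF assms(1)] assms(2,3), of "1 - 1/2" "1/2"]
    unfolding m_def by simp
  have "(1 - 1/2) * f x + (1/2) * f y < f m"
    unfolding m_def using assms(1-3) \<open>x \<noteq> y\<close> by (rule strictly_concave_onD) simp_all
  moreover have "f x = f y" "f m \<le> f x"
    using assms(2-5) \<open>m \<in> S\<close> by (auto intro: order_antisym)
  ultimately show False
    by simp
qed

lemma strictly_concave_on_ln: "strictly_concave_on {0<..} ln"
proof (rule strictly_concave_onI)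
  fix a b t :: real
  assume ab: "a \<in> {0<..}" "b \<in> {0<..}" "a \<noteq> b" and t: "0 < t" "t < 1"
  define m where "m = (1 - t) * a + t * b"
  have m: "m > 0"
    using ab t unfolding m_def by (simp add: add_pos_nonneg)
  have "a - m = t * (a - b)" "b - m = (1 - t) * (b - a)"
    unfolding m_def by (simp_all add: algebra_simps)
  then have "a \<noteq> m" "b \<noteq> m"
    using ab t by auto
  then have "(1 - t) * (ln a - ln m) + t * (ln b - ln m) < (1 - t) * ((a - m) / m) + t * ((b - m) / m)"
    using ab t m by (intro add_strict_mono mult_strict_left_mono ln_diff_less) auto
  also have "\<dots> = 0"
    using m unfolding m_def by (simp add: field_simps)
  finally show "(1 - t) * ln a + t * ln b < ln ((1 - t) *\<^sub>R a + t *\<^sub>R b)"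
    unfolding m_def by (simp add: algebra_simps)
qed (rule convex_real_interval)

lemma strictly_concave_on_ln_barrier:
  fixes T :: real
  assumes "T > 0"
  shows "strictly_concave_on {0..<T} (\<lambda>s. ln (1 - s / T))"
proof (rule strictly_concave_onI)
  fix x y t :: real
  assume "x \<in> {0..<T}" "y \<in> {0..<T}" "x \<noteq> y" and t: "0 < t" "t < 1"
  then have "1 - x / T \<in> {0<..}" "1 - y / T \<in> {0<..}" "1 - x / T \<noteq> 1 - y / T"
    using assms by auto
  then have "(1 - t) * ln (1 - x / T) + t * ln (1 - y / T)
      < ln ((1 - t) *\<^sub>R (1 - x / T) + t *\<^sub>R (1 - y / T))"
    using strictly_concave_on_ln t by (intro strictly_concave_onD)
  also have "(1 - t) *\<^sub>R (1 - x / T) + t *\<^sub>R (1 - y / T) = 1 - ((1 - t) *\<^sub>R x + t *\<^sub>R y) / T"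
    using assms by (simp add: field_simps)
  finally show "(1 - t) * ln (1 - x / T) + t * ln (1 - y / T)
      < ln (1 - ((1 - t) *\<^sub>R x + t *\<^sub>R y) / T)" .
qed (rule convex_real_interval)

definition log_sum_exp :: "real^'n::finite \<Rightarrow> real"
  where "log_sum_exp x = ln (\<Sum>j\<in>UNIV. exp (x $ j))"

lemma component_le_log_sum_exp: "x $ j \<le> log_sum_exp x"
proof -
  have "exp (x $ j) \<le> (\<Sum>k\<in>UNIV. exp (x $ k))"
    by (rule member_le_sum) auto
  then show ?thesis
    unfolding log_sum_exp_def by (subst ln_ge_iff) (auto intro: sum_pos)
qed

text \<open>Normalising by the two partition functions reduces the claim to the convexity of exp,
  summed over the coordinates.\<close>
lemma convex_on_log_sum_exp: "convex_on UNIV log_sum_exp"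
proof (rule convex_onI)
  fix t :: real and x y :: "real^'n"
  assume t: "0 < t" "t < 1"
  define Sx where "Sx = (\<Sum>j\<in>UNIV. exp (x $ j))"
  define Sy where "Sy = (\<Sum>j\<in>UNIV. exp (y $ j))"
  define Sz where "Sz = (\<Sum>j\<in>UNIV. exp ((1 - t) * x $ j + t * y $ j))"
  have pos: "Sx > 0" "Sy > 0" "Sz > 0"
    unfolding Sx_def Sy_def Sz_def by (auto intro: sum_pos)
  define w where "w = (1 - t) * ln Sx + t * ln Sy"
  have term_le: "exp ((1 - t) * x $ j + t * y $ j) / exp w
      \<le> (1 - t) * (exp (x $ j) / Sx) + t * (exp (y $ j) / Sy)" for j
  proof -
    have "exp ((1 - t) * x $ j + t * y $ j) / exp w
        = exp ((1 - t) * (x $ j - ln Sx) + t * (y $ j - ln Sy))"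
      unfolding w_def by (simp flip: exp_diff add: algebra_simps)
    also have "\<dots> \<le> (1 - t) * exp (x $ j - ln Sx) + t * exp (y $ j - ln Sy)"
      using convex_onD[OF exp_convex, of t] t by simp
    also have "\<dots> = (1 - t) * (exp (x $ j) / Sx) + t * (exp (y $ j) / Sy)"
      using pos by (simp add: exp_diff)
    finally show ?thesis .
  qed
  have "Sz / exp w \<le> (\<Sum>j\<in>UNIV. (1 - t) * (exp (x $ j) / Sx) + t * (exp (y $ j) / Sy))"
    unfolding Sz_def sum_divide_distrib by (intro sum_mono term_le)
  also have "\<dots> = (1 - t) * (Sx / Sx) + t * (Sy / Sy)"
    unfolding Sx_def Sy_def
    by (simp add: sum.distrib flip: sum_distrib_left sum_divide_distrib)
  also have "\<dots> = 1"
    using pos by simp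
  finally have "Sz \<le> exp w"
    by simp
  then have "ln Sz \<le> w"
    using pos by (metis ln_exp ln_le_cancel_iff exp_gt_zero)
  then show "log_sum_exp ((1 - t) *\<^sub>R x + t *\<^sub>R y) \<le> (1 - t) * log_sum_exp x + t * log_sum_exp y"
    unfolding log_sum_exp_def Sx_def Sy_def Sz_def w_def by simp
qed simp

lemma phi_eps_eq_log_sum_exp:
  "phi_eps \<epsilon> \<kappa> i \<mu> = - \<epsilon> * log_sum_exp (\<chi> j. - (\<kappa> i j + \<mu> $ j) / \<epsilon>)"
  by (simp add: phi_eps_def log_sum_exp_def)

lemma phi_eps_le:
  assumes "\<epsilon> > 0"
  shows "phi_eps \<epsilon> \<kappa> i \<mu> \<le> \<kappa> i j + \<mu> $ j"
  using component_le_log_sum_exp[of "\<chi> j. - (\<kappa> i j + \<mu> $ j) / \<epsilon>" j] assms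
  by (simp add: phi_eps_eq_log_sum_exp field_simps)

lemma concave_on_phi_eps:
  fixes \<kappa> :: "'m \<Rightarrow> 'n::finite \<Rightarrow> real"
  assumes "\<epsilon> > 0"
  shows "concave_on UNIV (phi_eps \<epsilon> \<kappa> i)"
  unfolding concave_on_def
proof (rule convex_onI)
  fix t :: real and x y :: "real^'n"
  assume t: "0 < t" "t < 1"
  define w :: "real^'n \<Rightarrow> real^'n" where "w \<mu> = (\<chi> j. - (\<kappa> i j + \<mu> $ j) / \<epsilon>)" for \<mu>
  have affine: "w ((1 - t) *\<^sub>R x + t *\<^sub>R y) = (1 - t) *\<^sub>R w x + t *\<^sub>R w y"
    using assms by (simp add: w_def vec_eq_iff field_simps)
  have "\<epsilon> * log_sum_exp (w ((1 - t) *\<^sub>R x + t *\<^sub>R y))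
      \<le> \<epsilon> * ((1 - t) * log_sum_exp (w x) + t * log_sum_exp (w y))"
    unfolding affine using convex_onD[OF convex_on_log_sum_exp, of t] t assms
    by (intro mult_left_mono) auto
  then show "- phi_eps \<epsilon> \<kappa> i ((1 - t) *\<^sub>R x + t *\<^sub>R y)
      \<le> (1 - t) * - phi_eps \<epsilon> \<kappa> i x + t * - phi_eps \<epsilon> \<kappa> i y"
    unfolding phi_eps_eq_log_sum_exp w_def by (simp add: algebra_simps)
qed simp

lemma concave_on_sum_fun:
  assumes "finite I" "convex S" "\<And>i. i \<in> I \<Longrightarrow> concave_on S (f i)"
  shows "concave_on S (\<lambda>x. \<Sum>i\<in>I. f i x)"
  using assms by (induction I rule: finite_induct) (auto simp: concave_on_const intro: concave_on_add)

lemma continuous_attains_sup_of_compact_superlevel: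
  fixes f :: "'a::topological_space \<Rightarrow> real"
  assumes "compact K" "K \<subseteq> S" "a \<in> K" "continuous_on K f"
    and "\<And>x. x \<in> S - K \<Longrightarrow> f x \<le> f a"
  shows "\<exists>m\<in>S. \<forall>x\<in>S. f x \<le> f m"
proof -
  obtain m where "m \<in> K" and max_K: "\<forall>x\<in>K. f x \<le> f m"
    using continuous_attains_sup[OF assms(1) _ assms(4)] assms(3) by blast
  then have "\<forall>x\<in>S. f x \<le> f m"
    using assms(3,5) by (metis Diff_iff order_trans)
  then show ?thesis
    using \<open>m \<in> K\<close> assms(2) by blast
qed

lemma box_T_eq: "box_T T = {\<mu>. \<forall>j. \<mu> $ j \<in> {0..<T}}"
  by (simp add: box_T_def)

lemma strictly_concave_on_dual_D:
  fixes c :: "'n::finite \<Rightarrow> real" and \<kappa> :: "'m::finite \<Rightarrow> 'n \<Rightarrow> real"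
  assumes "\<And>j. c j > 0" "T > 0" "\<epsilon> > 0" "\<And>i. r i \<ge> 0"
  shows "strictly_concave_on (box_T T) (dual_D T \<epsilon> r c \<kappa>)"
proof -
  have "strictly_concave_on (box_T T) (\<lambda>\<mu>. \<Sum>j\<in>UNIV. c j * ln (1 - \<mu> $ j / T))"
    unfolding box_T_eq using assms(1,2)
    by (intro strictly_concave_on_sum_coordinates strictly_concave_on_cmul
        strictly_concave_on_ln_barrier)
  moreover have "convex (box_T T :: (real^'n) set)"
    using calculation by (rule strictly_concave_on_imp_convex)
  then have "concave_on (box_T T) (phi_eps \<epsilon> \<kappa> i)" for i
    unfolding concave_on_def
    by (rule convex_on_subset[OF concave_on_phi_eps[OF assms(3), unfolded concave_on_def] subset_UNIV])
  then have "concave_on (box_T T) (\<lambda>\<mu>. \<Sum>i\<in>UNIV. r i * phi_eps \<epsilon> \<kappa> i \<mu>)"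
    using \<open>convex (box_T T)\<close> assms(4) by (intro concave_on_sum_fun concave_on_cmul) auto
  ultimately show ?thesis
    unfolding dual_D_def by (subst add.commute) (rule strictly_concave_on_add_concave_on)
qed

lemma dual_D_le_barrier:
  assumes "\<And>j. c j \<ge> 0" "T > 0" "\<epsilon> > 0" "\<And>i. r i \<ge> 0" "\<mu> \<in> box_T T"
  shows "dual_D T \<epsilon> r c \<kappa> \<mu> \<le> (\<Sum>i\<in>UNIV. r i * (\<kappa> i j + T)) + c j * ln (1 - \<mu> $ j / T)"
proof -
  have barrier_nonpos: "c k * ln (1 - \<mu> $ k / T) \<le> 0" for k
    using assms(1,2,5) by (intro mult_nonneg_nonpos) (auto simp: box_T_def)
  have "\<mu> $ j < T"
    using assms(5) by (simp add: box_T_def)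
  then have "phi_eps \<epsilon> \<kappa> i \<mu> \<le> \<kappa> i j + T" for i
    using phi_eps_le[OF assms(3), of \<kappa> i \<mu> j] by linarith
  then have "(\<Sum>i\<in>UNIV. r i * phi_eps \<epsilon> \<kappa> i \<mu>) \<le> (\<Sum>i\<in>UNIV. r i * (\<kappa> i j + T))"
    using assms(4) by (intro sum_mono mult_left_mono)
  moreover have "(\<Sum>k\<in>UNIV. c k * ln (1 - \<mu> $ k / T)) \<le> c j * ln (1 - \<mu> $ j / T)"
    using barrier_nonpos by (simp add: sum.remove[of UNIV j] sum_nonpos)
  ultimately show ?thesis
    unfolding dual_D_def by linarith
qed

lemma continuous_on_dual_D:
  fixes \<kappa> :: "'m::finite \<Rightarrow> 'n::finite \<Rightarrow> real"
  assumes "T > 0" "\<epsilon> > 0"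
  shows "continuous_on (box_T T) (dual_D T \<epsilon> r c \<kappa>)"
proof -
  have "(\<Sum>j\<in>UNIV. exp (f j)) \<noteq> 0" for f :: "'n \<Rightarrow> real"
    using sum_pos[of UNIV "\<lambda>j. exp (f j)"] by auto
  moreover have "1 - \<mu> $ j / T > 0" if "\<mu> \<in> box_T T" for \<mu> j
    using that assms(1) by (auto simp: box_T_def)
  ultimately show ?thesis
    unfolding dual_D_def phi_eps_def using assms
    by (intro continuous_intros continuous_on_ln) auto
qed

lemma dual_D_attains_max:
  assumes "\<And>j. c j > 0" "T > 0" "\<epsilon> > 0" "\<And>i. r i \<ge> 0"
  shows "\<exists>\<mu>s\<in>box_T T. \<forall>\<mu>\<in>box_T T. dual_D T \<epsilon> r c \<kappa> \<mu> \<le> dual_D T \<epsilon> r c \<kappa> \<mu>s"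
proof -
  let ?D = "dual_D T \<epsilon> r c \<kappa>"
  define M where "M j = (\<Sum>i\<in>UNIV. r i * (\<kappa> i j + T))" for j
  have bound: "?D \<mu> \<le> M j + c j * ln (1 - \<mu> $ j / T)" if "\<mu> \<in> box_T T" for \<mu> j
    unfolding M_def using dual_D_le_barrier[OF less_imp_le[OF assms(1)] assms(2-4) that] .
  have zero: "0 \<in> box_T T"
    using assms(2) by (simp add: box_T_def)
  text \<open>\<open>\<delta> j\<close> solves \<open>c j * ln (1 - \<delta> j / T) = D 0 - M j\<close>; beyond it in coordinate \<open>j\<close>
    the barrier pushes \<open>D\<close> below \<open>D 0\<close>.\<close>
  define \<delta> where "\<delta> j = T * (1 - exp ((?D 0 - M j) / c j))" for j
  have "?D 0 \<le> M j" for j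
    using bound[OF zero, of j] by simp
  then have \<delta>: "0 \<le> \<delta> j" "\<delta> j < T" for j
    using assms(1)[of j] assms(2) unfolding \<delta>_def by (auto simp: divide_nonpos_pos)
  define K where "K = cbox 0 (\<chi> j. \<delta> j)"
  have K_sub: "K \<subseteq> box_T T" and zero_K: "0 \<in> K"
    using \<delta> unfolding K_def box_T_def by (auto simp: mem_box_cart) (meson le_less_trans)
  have escape: "?D \<mu> \<le> ?D 0" if "\<mu> \<in> box_T T - K" for \<mu>
  proof -
    have "\<not> (\<forall>j. \<mu> $ j \<le> \<delta> j)"
      using that unfolding K_def box_T_def by (auto simp: mem_box_cart)
    then obtain j where "\<delta> j < \<mu> $ j"
      by (auto simp: not_le)
    then have "1 - \<mu> $ j / T < exp ((?D 0 - M j) / c j)"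
      using assms(2) unfolding \<delta>_def by (simp add: field_simps)
    moreover have "0 < 1 - \<mu> $ j / T"
      using that assms(2) by (simp add: box_T_def)
    ultimately have "ln (1 - \<mu> $ j / T) < (?D 0 - M j) / c j"
      by (metis ln_exp ln_less_cancel_iff exp_gt_zero)
    then have "c j * ln (1 - \<mu> $ j / T) < ?D 0 - M j"
      using assms(1)[of j] by (simp add: field_simps)
    then show ?thesis
      using bound[of \<mu> j] that by simp
  qed
  have "compact K"
    unfolding K_def by (rule compact_cbox)
  moreover have "continuous_on K ?D"
    using continuous_on_subset[OF continuous_on_dual_D[OF assms(2,3)] K_sub] .
  ultimately show ?thesis
    using continuous_attains_sup_of_compact_superlevel[of K "box_T T" 0 ?D] K_sub zero_K escape
    by blast
qed

theorem proposition2: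
  fixes c :: "'n::finite \<Rightarrow> real" and r :: "'m::finite \<Rightarrow> real"
    and \<kappa> :: "'m \<Rightarrow> 'n \<Rightarrow> real" and T \<epsilon> :: real
  assumes "\<And>j. c j > 0" and "T > 0" and "\<epsilon> > 0"
    and "\<And>i. r i > 0" and "\<And>i j. \<kappa> i j \<ge> 0"
  shows "strictly_concave_on (box_T T) (dual_D T \<epsilon> r c \<kappa>)
    \<and> (\<exists>!\<mu>s. \<mu>s \<in> box_T T \<and> (\<forall>\<mu>\<in>box_T T. dual_D T \<epsilon> r c \<kappa> \<mu> \<le> dual_D T \<epsilon> r c \<kappa> \<mu>s))"
proof -
  have r: "r i \<ge> 0" for i
    by (simp add: assms(4) less_imp_le)
  have concave: "strictly_concave_on (box_T T) (dual_D T \<epsilon> r c \<kappa>)"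
    using strictly_concave_on_dual_D[where c = c and r = r and \<kappa> = \<kappa>, OF assms(1-3) r] .
  obtain \<mu>s where max: "\<mu>s \<in> box_T T \<and> (\<forall>\<mu>\<in>box_T T. dual_D T \<epsilon> r c \<kappa> \<mu> \<le> dual_D T \<epsilon> r c \<kappa> \<mu>s)"
    using dual_D_attains_max[where c = c and r = r and \<kappa> = \<kappa>, OF assms(1-3) r] by blast
  show ?thesis
  proof (intro conjI ex1I)
    show "\<mu> = \<mu>s" if "\<mu> \<in> box_T T \<and> (\<forall>\<nu>\<in>box_T T. dual_D T \<epsilon> r c \<kappa> \<nu> \<le> dual_D T \<epsilon> r c \<kappa> \<mu>)" for \<mu>
      using strictly_concave_on_maximizer_unique[OF concave] that max by blast
  qed (use concave max in auto)
qed

end
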